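(* Let $\mathbb{K}\in\{\mathbb{R},\mathbb{C}\}$, $\star\in\{*,T\}$, $\epsilon_1,\epsilon_2\in\{1,-1\}$, and let $Q(\lambda)=\lambda^2M+\lambda D+K\in\mathbb{K}^{n\times n}[\lambda]$ satisfy $M^\star=\epsilon_1M$, $D^\star=\epsilon_2D$, $K^\star=\epsilon_1K$. Let $(\lambda_0,x_0)$ be an eigenpair of $Q(\lambda)$ with $\lambda_0\neq\epsilon_1\epsilon_2\lambda_0^\star$, and let $\tilde x_0$ be an eigenvector of $Q(\lambda)$ for the eigenvalue $\epsilon_1\epsilon_2\lambda_0^\star$. Let $X_0=[x_0\ \tilde x_0]$, $\Lambda_0=\mathrm{diag}(\lambda_0,\epsilon_1\epsilon_2\lambda_0^\star)$, and $s_0:=2\epsilon_1\epsilon_2\lambda_0^\star x_0^\star M\tilde x_0+x_0^\star D\tilde x_0$. Then $(X_0,\Lambda_0)$ is an invariant pair of $Q(\lambda)$ and $X_0^\star MX_0\Lambda_0+\epsilon_1\epsilon_2\Lambda_0^\star X_0^\star MX_0+X_0^\star DX_0=\begin{bmatrix}0&s_0\\\epsilon_2s_0^\star&0\end{bmatrix}$.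
   Context: For a matrix or vector $A$, $A^\star$ is $A^*$ (conjugate transpose) if $\star=*$ and $A^T$ if $\star=T$; for $\lambda\in\mathbb{C}$, $\lambda^\star=\overline{\lambda}$ if $\star=*$ and $\lambda^\star=\lambda$ if $\star=T$. An eigenpair $(\lambda_0,x_0)$ means $x_0\neq0$ and $(\lambda_0^2M+\lambda_0D+K)x_0=0$. A pair $(X,\Lambda)$ is an invariant pair of $Q(\lambda)$ if $MX\Lambda^2+DX\Lambda+KX=0$. *)

theory Defs
  imports "HOL-Analysis.Analysis"
begin

text \<open>The flag c selects the involution: c = True means conjugate transpose (*),
  c = False means plain transpose (T).\<close>

definition sstar :: "bool \<Rightarrow> complex \<Rightarrow> complex" where
  "sstar c z = (if c then cnj z else z)"

definition mstar :: "bool \<Rightarrow> complex^'m^'n \<Rightarrow> complex^'n^'m" where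
  "mstar c A = (\<chi> i j. sstar c (A $ j $ i))"

definition mscale :: "complex \<Rightarrow> complex^'m^'n \<Rightarrow> complex^'m^'n" where
  "mscale a A = (\<chi> i j. a * A $ i $ j)"

definition vform :: "bool \<Rightarrow> complex^'n \<Rightarrow> complex^'n^'n \<Rightarrow> complex^'n \<Rightarrow> complex" where
  "vform c x A y = (\<Sum>i\<in>UNIV. sstar c (x $ i) * (A *v y) $ i)"

definition Qeval :: "complex^'n^'n \<Rightarrow> complex^'n^'n \<Rightarrow> complex^'n^'n \<Rightarrow> complex \<Rightarrow> complex^'n^'n" where
  "Qeval M D K lam = (\<chi> i j. lam^2 * M$i$j + lam * D$i$j + K$i$j)"

definition eigenpair :: "complex^'n^'n \<Rightarrow> complex^'n^'n \<Rightarrow> complex^'n^'n \<Rightarrow> complex \<Rightarrow> complex^'n \<Rightarrow> bool" where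
  "eigenpair M D K lam x \<longleftrightarrow> x \<noteq> 0 \<and> Qeval M D K lam *v x = 0"

definition invariant_pair :: "complex^'n^'n \<Rightarrow> complex^'n^'n \<Rightarrow> complex^'n^'n \<Rightarrow> complex^'k^'n \<Rightarrow> complex^'k^'k \<Rightarrow> bool" where
  "invariant_pair M D K X L \<longleftrightarrow> M ** X ** (L ** L) + D ** X ** L + K ** X = 0"

end

theory Submission
  imports Defs
begin

text \<open>For an eigenpair \<open>(\<lambda>, x)\<close> put \<open>a = x\<^sup>\<star>Mx\<close>, \<open>d = x\<^sup>\<star>Dx\<close>, \<open>k = x\<^sup>\<star>Kx\<close>
  and \<open>\<epsilon> = \<epsilon>\<^sub>1\<epsilon>\<^sub>2\<close>. Applying \<open>\<star>\<close> to \<open>\<lambda>\<^sup>2a + \<lambda>d + k = 0\<close> and using the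
  (skew-)symmetry of \<open>M, D, K\<close> gives \<open>\<mu>\<^sup>2a + \<epsilon>\<mu>d + k = 0\<close> with \<open>\<mu> = \<lambda>\<^sup>\<star>\<close>.
  Subtracting, \<open>(\<lambda> - \<epsilon>\<mu>)(a(\<lambda> + \<epsilon>\<mu>) + d) = 0\<close>, so \<open>a(\<lambda> + \<epsilon>\<lambda>\<^sup>\<star>) + d = 0\<close>
  whenever \<open>\<lambda> \<noteq> \<epsilon>\<lambda>\<^sup>\<star>\<close>. Both \<open>(\<lambda>\<^sub>0, x\<^sub>0)\<close> and \<open>(\<epsilon>\<lambda>\<^sub>0\<^sup>\<star>, x\<^sub>0\<^sup>~)\<close> are
  such eigenpairs, so the diagonal entries of the structured matrix vanish. Its off-diagonal entries
  are \<open>s\<^sub>0\<close> by definition and, by the same symmetry, \<open>\<epsilon>\<^sub>2s\<^sub>0\<^sup>\<star>\<close>; and \<open>(X\<^sub>0, \<Lambda>\<^sub>0)\<close>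
  is an invariant pair because \<open>\<Lambda>\<^sub>0\<close> is diagonal and the columns of \<open>X\<^sub>0\<close> are eigenvectors.\<close>

lemma sstar_mult: "sstar c (a * b) = sstar c a * sstar c b"
  by (simp add: sstar_def)

lemma sstar_add: "sstar c (a + b) = sstar c a + sstar c b"
  by (simp add: sstar_def)

lemma sstar_sstar [simp]: "sstar c (sstar c a) = a"
  by (simp add: sstar_def)

lemma sstar_numeral [simp]: "sstar c (numeral k) = numeral k"
  by (simp add: sstar_def)

lemma sstar_sign: "e \<in> {1, -1} \<Longrightarrow> sstar c e = e"
  by (auto simp: sstar_def)

lemma sstar_sum: "sstar c (sum f S) = (\<Sum>x\<in>S. sstar c (f x))"
  by (simp add: sstar_def)

lemma sign_squared: "e \<in> {1, -1 :: 'a::ring_1} \<Longrightarrow> e * e = 1"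
  by auto

lemma sstar_vform: "sstar c (vform c x A y) = vform c y (mstar c A) x"
proof -
  have "sstar c (vform c x A y) = (\<Sum>i\<in>UNIV. \<Sum>j\<in>UNIV. x$i * sstar c (A$i$j) * sstar c (y$j))"
    by (simp add: vform_def sstar_sum sstar_mult matrix_vector_mult_def sum_distrib_left mult.assoc)
  also have "\<dots> = (\<Sum>j\<in>UNIV. \<Sum>i\<in>UNIV. x$i * sstar c (A$i$j) * sstar c (y$j))"
    by (rule sum.swap)
  also have "\<dots> = vform c y (mstar c A) x"
    by (simp add: vform_def mstar_def matrix_vector_mult_def sum_distrib_left algebra_simps)
  finally show ?thesis .
qed

lemma vform_mscale: "vform c x (mscale e A) y = e * vform c x A y"
  by (simp add: vform_def mscale_def matrix_vector_mult_def sum_distrib_left algebra_simps)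

lemma sstar_vform_swap:
  "mstar c A = mscale e A \<Longrightarrow> sstar c (vform c x A y) = e * vform c y A x"
  by (simp add: sstar_vform vform_mscale)

lemma vform_eq_0: "A *v y = 0 \<Longrightarrow> vform c x A y = 0"
  by (simp add: vform_def)

lemma Qeval_mult_vec:
  "Qeval M D K l *v x = l\<^sup>2 *s (M *v x) + l *s (D *v x) + K *v x"
  by (simp add: vec_eq_iff matrix_vector_mult_def Qeval_def sum.distrib sum_distrib_left algebra_simps)

lemma vform_Qeval:
  "vform c x (Qeval M D K l) y = l\<^sup>2 * vform c x M y + l * vform c x D y + vform c x K y"
  by (simp add: vform_def Qeval_mult_vec sum.distrib sum_distrib_left algebra_simps)

lemma mstar_mult_mult_entry:
  "(mstar c X ** A ** X) $ i $ j = vform c (column i X) A (column j X)"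
proof -
  have "(mstar c X ** A ** X) $ i $ j = (\<Sum>k\<in>UNIV. \<Sum>l\<in>UNIV. sstar c (X$l$i) * A$l$k * X$k$j)"
    by (simp add: matrix_matrix_mult_def mstar_def sum_distrib_right)
  also have "\<dots> = (\<Sum>l\<in>UNIV. \<Sum>k\<in>UNIV. sstar c (X$l$i) * A$l$k * X$k$j)"
    by (rule sum.swap)
  also have "\<dots> = vform c (column i X) A (column j X)"
    by (simp add: vform_def column_def matrix_vector_mult_def sum_distrib_left mult.assoc)
  finally show ?thesis .
qed

lemma quadratic_difference_factor:
  fixes a d k l m e :: "'a::idom"
  assumes "l\<^sup>2 * a + l * d + k = 0" and "m\<^sup>2 * a + e * m * d + k = 0"
    and "e * e = 1" and "l \<noteq> e * m"
  shows "a * (l + e * m) + d = 0"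
proof -
  have "(l - e * m) * (a * (l + e * m) + d) = 0"
    using assms(1-3) by algebra
  with assms(4) show ?thesis
    by simp
qed

lemma eigenvector_structured_form_eq_0:
  assumes e1: "e1 \<in> {1, -1}" and e2: "e2 \<in> {1, -1}"
    and hM: "mstar c M = mscale e1 M" and hD: "mstar c D = mscale e2 D" and hK: "mstar c K = mscale e1 K"
    and eig: "Qeval M D K l *v x = 0"
    and l: "l \<noteq> e1 * e2 * sstar c l"
  shows "vform c x M x * (l + e1 * e2 * sstar c l) + vform c x D x = 0"
proof -
  define a d k where "a = vform c x M x" and "d = vform c x D x" and "k = vform c x K x"
  have q: "l\<^sup>2 * a + l * d + k = 0"
    using vform_eq_0 [OF eig, of c x] by (simp add: vform_Qeval a_def d_def k_def)
  have "sstar c (l\<^sup>2 * a + l * d + k) = 0"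
    by (simp add: q sstar_def)
  then have "(sstar c l)\<^sup>2 * (e1 * a) + sstar c l * (e2 * d) + e1 * k = 0"
    using sstar_vform_swap [OF hM] sstar_vform_swap [OF hD] sstar_vform_swap [OF hK]
    by (simp add: sstar_add sstar_mult power2_eq_square a_def d_def k_def)
  then have "e1 * ((sstar c l)\<^sup>2 * (e1 * a) + sstar c l * (e2 * d) + e1 * k) = 0"
    by simp
  then have q_star: "(sstar c l)\<^sup>2 * a + e1 * e2 * sstar c l * d + k = 0"
    using sign_squared [OF e1] by algebra
  have "a * (l + e1 * e2 * sstar c l) + d = 0"
    using quadratic_difference_factor [OF q q_star] l sign_squared [OF e1] sign_squared [OF e2]
    by (simp add: algebra_simps)
  then show ?thesis
    by (simp add: a_def d_def mult.commute)
qed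

lemma sign_sstar_involutive:
  assumes "e1 \<in> {1, -1}" and "e2 \<in> {1, -1}"
  shows "e1 * e2 * sstar c (e1 * e2 * sstar c z) = z"
proof -
  have "e1 * e2 * sstar c (e1 * e2 * sstar c z) = (e1 * e1) * (e2 * e2) * z"
    by (simp add: sstar_mult sstar_sign [OF assms(1)] sstar_sign [OF assms(2)] algebra_simps)
  then show ?thesis
    using sign_squared [OF assms(1)] sign_squared [OF assms(2)] by simp
qed

lemma structured_form_swap:
  assumes e1: "e1 \<in> {1, -1}" and e2: "e2 \<in> {1, -1}"
    and hM: "mstar c M = mscale e1 M" and hD: "mstar c D = mscale e2 D"
  shows "vform c y M x * (2 * l) + vform c y D x
    = e2 * sstar c (2 * (e1 * e2 * sstar c l) * vform c x M y + vform c x D y)"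
proof -
  have "e2 * sstar c (2 * (e1 * e2 * sstar c l) * vform c x M y + vform c x D y)
      = (e1 * e1) * (e2 * e2) * (2 * l) * vform c y M x + (e2 * e2) * vform c y D x"
    by (simp add: sstar_add sstar_mult sstar_sign [OF e1] sstar_sign [OF e2]
        sstar_vform_swap [OF hM] sstar_vform_swap [OF hD] algebra_simps)
  then show ?thesis
    using sign_squared [OF e1] sign_squared [OF e2] by (simp add: mult.commute)
qed

definition diag_mat :: "('k \<Rightarrow> 'a::zero) \<Rightarrow> 'a^'k^'k" where
  "diag_mat l = (\<chi> i j. if i = j then l i else 0)"

lemma matrix_mul_diag_mat: "(A :: 'a::semiring_1^'k^'m) ** diag_mat l = (\<chi> i j. A $ i $ j * l j)"
  by (simp add: vec_eq_iff matrix_matrix_mult_def diag_mat_def if_distrib [where f = "times _"] cong: if_cong)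

lemma diag_mat_mul: "diag_mat l ** (A :: 'a::semiring_1^'m^'k) = (\<chi> i j. l i * A $ i $ j)"
  by (simp add: vec_eq_iff matrix_matrix_mult_def diag_mat_def if_distrib [where f = "\<lambda>x. x * _"] cong: if_cong)

lemma diag_mat_mul_diag_mat: "diag_mat l ** diag_mat m = diag_mat (\<lambda>i. l i * (m i :: 'a::semiring_1))"
  unfolding matrix_mul_diag_mat by (simp add: vec_eq_iff diag_mat_def)

lemma mstar_diag_mat: "mstar c (diag_mat l) = diag_mat (\<lambda>i. sstar c (l i))"
  by (simp add: vec_eq_iff mstar_def diag_mat_def sstar_def)

lemma matrix_mul_column: "(A ** X) $ i $ j = (A *v column j X) $ i"
  by (simp add: matrix_matrix_mult_def matrix_vector_mult_def column_def)

lemma invariant_pair_diag_mat_iff: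
  "invariant_pair M D K X (diag_mat l) \<longleftrightarrow> (\<forall>j. Qeval M D K (l j) *v column j X = 0)"
proof -
  have "(M ** X ** (diag_mat l ** diag_mat l) + D ** X ** diag_mat l + K ** X) $ i $ j
        = (Qeval M D K (l j) *v column j X) $ i" for i j
    unfolding diag_mat_mul_diag_mat by (simp add: diag_mat_mul matrix_mul_diag_mat matrix_mul_column Qeval_mult_vec
        power2_eq_square algebra_simps)
  then show ?thesis
    unfolding invariant_pair_def by (auto simp: vec_eq_iff)
qed

lemma structured_matrix_diag_mat_entry:
  "(mstar c X ** M ** X ** diag_mat l + mscale e (mstar c (diag_mat l) ** mstar c X ** M ** X)
      + mstar c X ** D ** X) $ i $ j
   = vform c (column i X) M (column j X) * (l j + e * sstar c (l i)) + vform c (column i X) D (column j X)"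
proof -
  have "mstar c (diag_mat l) ** mstar c X ** M ** X = diag_mat (\<lambda>i. sstar c (l i)) ** (mstar c X ** M ** X)"
    by (simp add: matrix_mul_assoc mstar_diag_mat)
  then show ?thesis
    by (simp add: matrix_mul_diag_mat diag_mat_mul mscale_def mstar_mult_mult_entry algebra_simps)
qed

theorem corollary2p6:
  fixes M D K :: "complex^'n^'n"
    and realK c :: bool
    and e1 e2 lam0 :: complex
    and x0 xt0 :: "complex^'n"
  assumes field: "realK \<Longrightarrow> (\<forall>i j. Im (M$i$j) = 0 \<and> Im (D$i$j) = 0 \<and> Im (K$i$j) = 0)"
    and e1: "e1 \<in> {1, -1}" and e2: "e2 \<in> {1, -1}"
    and hM: "mstar c M = mscale e1 M" and hD: "mstar c D = mscale e2 D" and hK: "mstar c K = mscale e1 K"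
    and ep: "eigenpair M D K lam0 x0"
    and neq: "lam0 \<noteq> e1 * e2 * sstar c lam0"
    and ept: "eigenpair M D K (e1 * e2 * sstar c lam0) xt0"
  shows "let X0 = (\<chi> i j. if j = (1::2) then x0 $ i else xt0 $ i) :: complex^2^'n;
             L0 = (\<chi> i j. if i = j then (if i = (1::2) then lam0 else e1 * e2 * sstar c lam0) else 0) :: complex^2^2;
             s0 = 2 * e1 * e2 * sstar c lam0 * vform c x0 M xt0 + vform c x0 D xt0
         in invariant_pair M D K X0 L0 \<and>
            mstar c X0 ** M ** X0 ** L0 + mscale (e1 * e2) (mstar c L0 ** mstar c X0 ** M ** X0)
              + mstar c X0 ** D ** X0
            = (\<chi> i j. if i = 1 \<and> j = 2 then s0 else if i = 2 \<and> j = 1 then e2 * sstar c s0 else 0)"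
proof -
  define mu where "mu = e1 * e2 * sstar c lam0"
  define l where "l = (\<lambda>i::2. if i = 1 then lam0 else mu)"
  define X0 where "X0 = ((\<chi> i j. if j = (1::2) then x0 $ i else xt0 $ i) :: complex^2^'n)"
  have columns: "column 1 X0 = x0" "column 2 X0 = xt0"
    by (simp_all add: X0_def column_def vec_eq_iff)
  have L0: "(\<chi> i j. if i = j then (if i = (1::2) then lam0 else mu) else 0) = diag_mat l"
    by (simp add: diag_mat_def l_def)
  have mu_star: "e1 * e2 * sstar c mu = lam0"
    unfolding mu_def by (rule sign_sstar_involutive [OF e1 e2])
  have coeff: "l j + e1 * e2 * sstar c (l i) = l j + (if i = 1 then mu else lam0)" for i j
    by (simp add: l_def mu_star flip: mu_def)
  have eig0: "Qeval M D K lam0 *v x0 = 0" and eigt: "Qeval M D K mu *v xt0 = 0"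
    using ep ept by (simp_all add: eigenpair_def mu_def)
  have "invariant_pair M D K X0 (diag_mat l)"
    using eig0 eigt by (simp add: invariant_pair_diag_mat_iff forall_2 l_def columns)
  moreover have "vform c x0 M x0 * (lam0 + mu) + vform c x0 D x0 = 0"
    using eigenvector_structured_form_eq_0 [OF e1 e2 hM hD hK eig0 neq] by (simp add: mu_def)
  moreover have "vform c xt0 M xt0 * (mu + lam0) + vform c xt0 D xt0 = 0"
    using eigenvector_structured_form_eq_0 [OF e1 e2 hM hD hK eigt] neq
    unfolding mu_star by (auto simp: mu_def)
  moreover have "vform c xt0 M x0 * (2 * lam0) + vform c xt0 D x0
      = e2 * sstar c (2 * mu * vform c x0 M xt0 + vform c x0 D xt0)"
    unfolding mu_def by (rule structured_form_swap [OF e1 e2 hM hD])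
  moreover have "2 * e1 * e2 * sstar c lam0 = 2 * mu"
    by (simp add: mu_def)
  ultimately show ?thesis
    unfolding Let_def mu_def [symmetric] X0_def [symmetric] L0
    by (simp only: vec_eq_iff forall_2 structured_matrix_diag_mat_entry coeff columns)
      (simp add: l_def)
qed

end
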